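(* Let $R>0$, $\sqrt3R\le s<t\le2R$, let $u,B:\mathbb{R}^3\to\mathbb{R}^3$ be smooth, let $p\in(\frac32,\frac92]$ with $p'=\frac{p}{p-1}$, let $q\ge1$, and set $$J_3=\frac{1}{t-s}\|B\|_{L^{2p'}(B_t\setminus B_{3R/2})}^2\|u\|_{L^p(B_t\setminus B_s)}.$$ (i) If $1\le q<2p'$, then for any $\delta>0$ there is $C_\delta>0$ (independent of $R,s,t,u,B$) such that $$J_3\le\delta\|B\|_{L^6(B_t\setminus B_{3R/2})}^2+\frac{C_\delta}{(t-s)^{\frac{(6-q)p'}{(3-p')q}}}\|u\|_{L^p(A_R)}^{\frac{(6-q)p'}{(3-p')q}}\|B\|_{L^q(A_R)}^2.$$ (ii) If $1\le q<2p'$, then $$J_3\le\frac{1}{t-s}\|u\|_{L^p(B_t\setminus B_s)}\|B\|_{L^q(B_t\setminus B_{3R/2})}^{\frac{2(3-p')q}{(6-q)p'}}\|B\|_{L^6(B_t\setminus B_{3R/2})}^{\frac{12p'-6q}{(6-q)p'}}.$$ (iii) If $q\ge2p'$, then there is $C>0$ (independent of $R,s,t,u,B$) such that $$J_3\le\frac{C}{t-s}R^{3-\frac3p-\frac6q}\|B\|_{L^q(A_R)}^2\|u\|_{L^p(A_R)}.$$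
   Context: For $r>0$, $B_r$ is the open ball of radius $r$ centered at the origin in $\mathbb{R}^3$, and $A_R=B_{2R}\setminus\overline{B_{3R/2}}$. *)

theory Defs
  imports "HOL-Analysis.Analysis"
begin

text \<open>Smooth (C-infinity) vector fields on R^3: f belongs to a family of continuous
  functions that is closed under taking all partial derivatives.\<close>
definition smooth3 :: "(real^3 \<Rightarrow> real^3) \<Rightarrow> bool" where
  "smooth3 f \<longleftrightarrow> (\<exists>S. f \<in> S \<and>
     (\<forall>g\<in>S. continuous_on UNIV g \<and>
        (\<forall>i::3. \<exists>g'\<in>S. \<forall>x.
           ((\<lambda>h. g (x + h *\<^sub>R axis i 1)) has_vector_derivative g' x) (at 0))))"

definition Lnorm :: "real \<Rightarrow> (real^3) set \<Rightarrow> (real^3 \<Rightarrow> real^3) \<Rightarrow> real" where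
  "Lnorm p S f = (LINT x:S|lebesgue. norm (f x) powr p) powr (1 / p)"

definition annulus :: "real \<Rightarrow> (real^3) set" where
  "annulus R = ball 0 (2*R) - cball 0 (3*R/2)"

end

theory Submission
  imports Defs
begin

text \<open>For q < 2p' < 6, Hoelder's inequality interpolates L^{2p'} between L^q and L^6, which is (ii).
  Young's inequality with a small delta splits the right-hand side of (ii) into
  delta ||B||_6^2 plus a power of ||u||_p times ||B||_q^2; since s >= sqrt 3 R > 3R/2, both
  shells lie in A_R up to the null sphere |x| = 3R/2, which gives (i). For q >= 2p', Hoelder's
  inequality against the constant 1 costs the factor |B_t - B_{3R/2}|^{1/p' - 2/q}, which is
  at most C R^{3/p' - 6/q}, and 3/p' = 3 - 3/p gives (iii).\<close>

lemma integral_powr_mult_powr_le: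
  fixes F G :: "'a \<Rightarrow> real"
  assumes a: "0 < a" "a < 1"
    and F: "integrable M F" "\<And>x. F x \<ge> 0" and G: "integrable M G" "\<And>x. G x \<ge> 0"
    and FG: "integrable M (\<lambda>x. F x powr a * G x powr (1 - a))"
  shows "(\<integral>x. F x powr a * G x powr (1 - a) \<partial>M)
    \<le> (\<integral>x. F x \<partial>M) powr a * (\<integral>x. G x \<partial>M) powr (1 - a)"
proof -
  define A where "A = (\<integral>x. F x \<partial>M)"
  define B where "B = (\<integral>x. G x \<partial>M)"
  have "A \<ge> 0" "B \<ge> 0"
    unfolding A_def B_def using F G by (simp_all add: integral_nonneg)
  consider "A = 0 \<or> B = 0" | "A > 0" "B > 0"
    using \<open>A \<ge> 0\<close> \<open>B \<ge> 0\<close> by fastforce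
  then show ?thesis
  proof cases
    case 1
    then have "(AE x in M. F x = 0) \<or> (AE x in M. G x = 0)"
      unfolding A_def B_def using integral_nonneg_eq_0_iff_AE F G by auto
    then have "AE x in M. F x powr a * G x powr (1 - a) = 0"
      by (elim disjE) (auto elim!: eventually_mono)
    then have "(\<integral>x. F x powr a * G x powr (1 - a) \<partial>M) = 0"
      by (rule integral_eq_zero_AE)
    then show ?thesis by simp
  next
    case 2
    have pointwise: "F x powr a * G x powr (1 - a)
        \<le> A powr a * B powr (1 - a) * (a * (F x / A) + (1 - a) * (G x / B))" for x
    proof (cases "F x = 0 \<or> G x = 0")
      case True
      then show ?thesis using a F(2)[of x] G(2)[of x] 2 by auto
    next
      case False
      then have "F x > 0" "G x > 0" using F(2)[of x] G(2)[of x] by auto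
      then have "(F x / A) powr a * (G x / B) powr (1 - a) \<le> a * (F x / A) + (1 - a) * (G x / B)"
        using a 2 by (intro Youngs_inequality_0) auto
      moreover have "F x powr a * G x powr (1 - a)
          = A powr a * B powr (1 - a) * ((F x / A) powr a * (G x / B) powr (1 - a))"
        using 2 by (simp add: powr_divide)
      ultimately show ?thesis by (simp add: mult_left_mono)
    qed
    have "(\<integral>x. F x powr a * G x powr (1 - a) \<partial>M)
        \<le> (\<integral>x. A powr a * B powr (1 - a) * (a * (F x / A) + (1 - a) * (G x / B)) \<partial>M)"
      using F G by (intro integral_mono[OF FG _ pointwise]) auto
    also have "\<dots> = A powr a * B powr (1 - a)"
      using F G 2 by (simp add: A_def B_def)
    finally show ?thesis unfolding A_def B_def .
  qed
qed

lemma set_integral_powr_mult_powr_le: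
  fixes f g :: "'a \<Rightarrow> real"
  assumes a: "0 < a" "a < 1"
    and f: "set_integrable M S f" "\<And>x. f x \<ge> 0" and g: "set_integrable M S g" "\<And>x. g x \<ge> 0"
    and fg: "set_integrable M S (\<lambda>x. f x powr a * g x powr (1 - a))"
  shows "(LINT x:S|M. f x powr a * g x powr (1 - a))
    \<le> (LINT x:S|M. f x) powr a * (LINT x:S|M. g x) powr (1 - a)"
proof -
  have indicator_powr: "indicator S x * (f x powr a * g x powr (1 - a))
      = (indicator S x * f x) powr a * (indicator S x * g x) powr (1 - a)" for x
    using a by (cases "x \<in> S") auto
  show ?thesis
    using integral_powr_mult_powr_le[OF a, of M "\<lambda>x. indicator S x * f x" "\<lambda>x. indicator S x * g x"]
      f g fg by (simp add: set_integrable_def set_lebesgue_integral_def indicator_powr)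
qed

lemma Youngs_inequality_epsilon:
  fixes \<theta> \<delta> :: real
  assumes \<theta>: "0 < \<theta>" "\<theta> < 1" and "\<delta> > 0"
  obtains C where "C > 0"
    "\<And>X Y. X \<ge> 0 \<Longrightarrow> Y \<ge> 0 \<Longrightarrow> Y * X powr (1 - \<theta>) \<le> \<delta> * X + C * Y powr (1/\<theta>)"
proof
  define k where "k = \<delta> / (1 - \<theta>)"
  have "k > 0" using assms by (simp add: k_def)
  define K where "K = k powr (-(1 - \<theta>) / \<theta>)"
  have "K > 0" using \<open>k > 0\<close> by (simp add: K_def)
  then show "\<theta> * K > 0" using \<theta> by simp
  fix X Y :: real assume "X \<ge> 0" "Y \<ge> 0"
  show "Y * X powr (1 - \<theta>) \<le> \<delta> * X + \<theta> * K * Y powr (1/\<theta>)"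
  proof (cases "X = 0 \<or> Y = 0")
    case True
    then show ?thesis using \<open>X \<ge> 0\<close> \<open>Y \<ge> 0\<close> \<theta> \<open>K > 0\<close> \<open>\<delta> > 0\<close> by auto
  next
    case False
    then have "X > 0" "Y > 0" using \<open>X \<ge> 0\<close> \<open>Y \<ge> 0\<close> by auto
    have "Y * X powr (1 - \<theta>) = (K * Y powr (1/\<theta>)) powr \<theta> * (k * X) powr (1 - \<theta>)"
      using \<theta> \<open>k > 0\<close> \<open>Y > 0\<close>
      by (simp add: K_def powr_mult powr_powr flip: powr_add)
    also have "\<dots> \<le> \<theta> * (K * Y powr (1/\<theta>)) + (1 - \<theta>) * (k * X)"
      using \<theta> \<open>K > 0\<close> \<open>k > 0\<close> \<open>X > 0\<close> \<open>Y > 0\<close> by (intro Youngs_inequality_0) auto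
    also have "(1 - \<theta>) * (k * X) = \<delta> * X" using \<theta> by (simp add: k_def)
    finally show ?thesis by (simp add: algebra_simps)
  qed
qed

lemma smooth3_imp_continuous: "smooth3 f \<Longrightarrow> continuous_on UNIV f"
  unfolding smooth3_def by blast

lemma set_integrable_bounded_continuous:
  fixes h :: "'a::euclidean_space \<Rightarrow> real"
  assumes "continuous_on UNIV h" "S \<in> sets lebesgue" "bounded S"
  shows "set_integrable lebesgue S h"
proof -
  obtain a where "S \<subseteq> cbox (-a) a"
    using bounded_subset_cbox_symmetric assms(3) by blast
  moreover have "h absolutely_integrable_on cbox (-a) a"
    using assms(1) continuous_on_subset by (blast intro: absolutely_integrable_continuous)
  ultimately show ?thesis
    using set_integrable_subset assms(2) by blast
qed

lemma set_integrable_norm_powr: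
  fixes f :: "'a::euclidean_space \<Rightarrow> 'b::real_normed_vector"
  assumes "continuous_on UNIV f" "r > 0" "S \<in> sets lebesgue" "bounded S"
  shows "set_integrable lebesgue S (\<lambda>x. norm (f x) powr r)"
  using assms by (intro set_integrable_bounded_continuous continuous_on_powr')
    (auto intro!: continuous_intros)

lemma Lnorm_nonneg: "Lnorm r S f \<ge> 0"
  unfolding Lnorm_def by simp

lemma set_integral_norm_powr_nonneg: "(LINT x:S|M. norm (f x) powr r) \<ge> 0"
  unfolding set_lebesgue_integral_def by (auto intro!: integral_nonneg_AE)

lemma power2_powr: "(x powr a)\<^sup>2 = x powr (2 * a)" for x a :: real
  by (simp add: power2_eq_square flip: powr_add)

lemma powr_power2: "x \<ge> 0 \<Longrightarrow> (x\<^sup>2) powr a = x powr (2 * a)" for x a :: real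
  by (cases "x = 0") (auto simp: powr_powr [symmetric] powr_realpow)

lemma Lnorm_mono_null:
  fixes f :: "real^3 \<Rightarrow> real^3"
  assumes f: "continuous_on UNIV f" and "r > 0"
    and S: "S \<in> sets lebesgue" "bounded S" and T: "T \<in> sets lebesgue" "bounded T"
    and "S \<subseteq> T \<union> N" "N \<in> null_sets lebesgue"
  shows "Lnorm r S f \<le> Lnorm r T f"
proof -
  have "AE x in lebesgue. x \<notin> N"
    using \<open>N \<in> null_sets lebesgue\<close> by (rule AE_not_in)
  then have "AE x in lebesgue.
      indicator S x *\<^sub>R norm (f x) powr r \<le> indicator T x *\<^sub>R norm (f x) powr r"
    by (rule eventually_mono) (use \<open>S \<subseteq> T \<union> N\<close> in \<open>auto simp: indicator_def\<close>)
  then have "(LINT x:S|lebesgue. norm (f x) powr r) \<le> (LINT x:T|lebesgue. norm (f x) powr r)"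
    using set_integrable_norm_powr[OF f \<open>r > 0\<close>] S T
    unfolding set_lebesgue_integral_def set_integrable_def by (intro integral_mono_AE) auto
  then show ?thesis
    unfolding Lnorm_def using \<open>r > 0\<close> by (intro powr_mono2) (auto intro!: set_integral_norm_powr_nonneg)
qed

lemma Lnorm_interpolation:
  fixes f :: "real^3 \<Rightarrow> real^3"
  assumes qrs: "0 < q" "q < r" "r < s"
    and f: "continuous_on UNIV f" and S: "S \<in> sets lebesgue" "bounded S"
  defines "\<theta> \<equiv> (1/r - 1/s) / (1/q - 1/s)"
  shows "Lnorm r S f \<le> Lnorm q S f powr \<theta> * Lnorm s S f powr (1 - \<theta>)"
proof -
  define I where "I e = (LINT x:S|lebesgue. norm (f x) powr e)" for e
  define \<alpha> where "\<alpha> = (s - r) / (s - q)"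
  have "s - q > 0" using qrs by simp
  have \<alpha>: "0 < \<alpha>" "\<alpha> < 1" using qrs by (auto simp: \<alpha>_def field_simps)
  have "\<alpha> * (s - q) = s - r"
    using \<open>s - q > 0\<close> by (simp add: \<alpha>_def)
  then have r_eq: "r = \<alpha> * q + (1 - \<alpha>) * s"
    by (simp add: algebra_simps)
  have powr_split:
    "norm (f x) powr r = (norm (f x) powr q) powr \<alpha> * (norm (f x) powr s) powr (1 - \<alpha>)" for x
    by (subst r_eq) (simp add: powr_powr powr_add mult.commute)
  have "I r \<le> I q powr \<alpha> * I s powr (1 - \<alpha>)"
    unfolding I_def powr_split
    using \<alpha> qrs set_integrable_norm_powr[OF f _ S]
    by (intro set_integral_powr_mult_powr_le) (auto simp flip: powr_split)
  then have "Lnorm r S f \<le> (I q powr \<alpha> * I s powr (1 - \<alpha>)) powr (1/r)"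
    unfolding Lnorm_def I_def[symmetric]
    using qrs by (intro powr_mono2) (auto simp: I_def intro!: set_integral_norm_powr_nonneg)
  also have "\<dots> = Lnorm q S f powr (\<alpha> * q / r) * Lnorm s S f powr ((1 - \<alpha>) * s / r)"
    using qrs by (simp add: Lnorm_def I_def powr_mult powr_powr)
  also have "\<alpha> * q / r = \<theta>"
    using qrs \<open>s - q > 0\<close> by (simp add: \<alpha>_def \<theta>_def field_simps)
  also have "(1 - \<alpha>) * s / r = 1 - \<theta>"
    using qrs \<open>s - q > 0\<close> by (simp add: \<alpha>_def \<theta>_def field_simps)
  finally show ?thesis .
qed

lemma Lnorm_le_measure_powr:
  fixes f :: "real^3 \<Rightarrow> real^3"
  assumes rq: "0 < r" "r < q"
    and f: "continuous_on UNIV f" and S: "S \<in> sets lebesgue" "bounded S"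
  shows "Lnorm r S f \<le> measure lebesgue S powr (1/r - 1/q) * Lnorm q S f"
proof -
  define I where "I e = (LINT x:S|lebesgue. norm (f x) powr e)" for e
  define \<alpha> where "\<alpha> = r / q"
  have \<alpha>: "0 < \<alpha>" "\<alpha> < 1" using rq by (auto simp: \<alpha>_def)
  have powr_\<alpha>: "(norm (f x) powr q) powr \<alpha> = norm (f x) powr r" for x
    using rq by (simp add: \<alpha>_def powr_powr)
  then have powr_split: "norm (f x) powr r = (norm (f x) powr q) powr \<alpha> * 1 powr (1 - \<alpha>)" for x
    by simp
  have "I r \<le> I q powr \<alpha> * (LINT x:S|lebesgue. 1) powr (1 - \<alpha>)"
    unfolding I_def powr_split
    using \<alpha> rq S set_integrable_norm_powr[OF f _ S] set_integrable_bounded_continuous[OF _ S]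
    by (intro set_integral_powr_mult_powr_le) (auto simp: powr_\<alpha>)
  also have "(LINT x:S|lebesgue. 1) = measure lebesgue S"
    using S by (simp add: set_lebesgue_integral_def)
  finally have "Lnorm r S f \<le> (I q powr \<alpha> * measure lebesgue S powr (1 - \<alpha>)) powr (1/r)"
    unfolding Lnorm_def I_def[symmetric]
    using rq by (intro powr_mono2) (auto simp: I_def intro!: set_integral_norm_powr_nonneg)
  also have "\<dots> = Lnorm q S f * measure lebesgue S powr ((1 - \<alpha>) / r)"
    using rq by (simp add: Lnorm_def I_def \<alpha>_def powr_mult powr_powr)
  also have "(1 - \<alpha>) / r = 1/r - 1/q"
    using rq by (simp add: \<alpha>_def field_simps)
  finally show ?thesis by (simp only: mult.commute)
qed

lemma Lnorm_power2_interpolation_L6: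
  fixes f :: "real^3 \<Rightarrow> real^3"
  assumes qP: "0 < q" "q < 2*P" "P < 3"
    and f: "continuous_on UNIV f" and S: "S \<in> sets lebesgue" "bounded S"
  shows "(Lnorm (2*P) S f)\<^sup>2 \<le> Lnorm q S f powr (2*(3 - P)*q / ((6 - q)*P))
      * Lnorm 6 S f powr ((12*P - 6*q) / ((6 - q)*P))"
proof -
  define \<theta> where "\<theta> = (1/(2*P) - 1/6) / (1/q - 1/6)"
  have "Lnorm (2*P) S f \<le> Lnorm q S f powr \<theta> * Lnorm 6 S f powr (1 - \<theta>)"
    unfolding \<theta>_def using qP by (intro Lnorm_interpolation f S) auto
  then have "(Lnorm (2*P) S f)\<^sup>2 \<le> (Lnorm q S f powr \<theta> * Lnorm 6 S f powr (1 - \<theta>))\<^sup>2"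
    by (intro power_mono Lnorm_nonneg)
  also have "\<dots> = Lnorm q S f powr (2*\<theta>) * Lnorm 6 S f powr (2*(1 - \<theta>))"
    by (simp add: power_mult_distrib power2_powr)
  also have "2*\<theta> = 2*(3 - P)*q / ((6 - q)*P)"
    using qP by (simp add: \<theta>_def field_simps)
  also have "2*(1 - \<theta>) = (12*P - 6*q) / ((6 - q)*P)"
    using qP by (simp add: \<theta>_def field_simps)
  finally show ?thesis .
qed

lemma shell_subset_annulus:
  assumes "3*R/2 \<le> a" "t \<le> 2*R"
  shows "ball (0::real^3) t - ball 0 a \<subseteq> annulus R \<union> sphere 0 (3*R/2)"
  using assms by (auto simp: annulus_def)

lemma Lnorm_shell_le_annulus:
  fixes f :: "real^3 \<Rightarrow> real^3"
  assumes "continuous_on UNIV f" "0 < r" "3*R/2 \<le> a" "t \<le> 2*R"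
  shows "Lnorm r (ball 0 t - ball 0 a) f \<le> Lnorm r (annulus R) f"
proof (rule Lnorm_mono_null)
  show "sphere (0::real^3) (3*R/2) \<in> null_sets lebesgue"
    using negligible_sphere negligible_iff_null_sets by blast
qed (use assms shell_subset_annulus in \<open>auto simp: annulus_def\<close>)

lemma measure_shell_le:
  assumes "0 < R" "t \<le> 2*R"
  shows "measure lebesgue (ball (0::real^3) t - ball 0 a) \<le> 8 * measure lborel (ball (0::real^3) 1) * R^3"
proof -
  have "measure lebesgue (ball (0::real^3) t - ball 0 a) \<le> measure lebesgue (ball (0::real^3) (2*R))"
    using assms by (intro measure_mono_fmeasurable) auto
  also have "\<dots> = 8 * measure lborel (ball (0::real^3) 1) * R^3"
    using content_ball_conv_unit_ball[of "2*R" "0::real^3"] assms by simp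
  finally show ?thesis .
qed

lemma Lnorm_shell_power2_le_annulus:
  fixes f :: "real^3 \<Rightarrow> real^3"
  assumes "0 < P" "2*P \<le> q" "0 < R" "t \<le> 2*R" and f: "continuous_on UNIV f"
  shows "(Lnorm (2*P) (ball 0 t - ball 0 (3*R/2)) f)\<^sup>2
    \<le> (8 * measure lborel (ball (0::real^3) 1)) powr (1/P - 2/q) * R powr (3/P - 6/q)
      * (Lnorm q (annulus R) f)\<^sup>2"
proof -
  define Sh where "Sh = ball (0::real^3) t - ball 0 (3*R/2)"
  define K where "K = measure lborel (ball (0::real^3) 1)"
  have "K > 0" unfolding K_def by (rule content_ball_pos) simp
  have shell_le_annulus: "Lnorm r Sh f \<le> Lnorm r (annulus R) f" if "r > 0" for r
    unfolding Sh_def using assms that by (intro Lnorm_shell_le_annulus) auto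
  consider "q = 2*P" | "2*P < q" using assms by linarith
  then show ?thesis
  proof cases
    case 1
    then have "(Lnorm (2*P) Sh f)\<^sup>2 \<le> (Lnorm q (annulus R) f)\<^sup>2"
      using shell_le_annulus \<open>0 < P\<close> by (intro power_mono Lnorm_nonneg) auto
    then show ?thesis
      using 1 \<open>0 < P\<close> \<open>0 < R\<close> \<open>K > 0\<close> by (simp add: Sh_def K_def)
  next
    case 2
    have "(Lnorm (2*P) Sh f)\<^sup>2 \<le> (measure lebesgue Sh powr (1/(2*P) - 1/q) * Lnorm q Sh f)\<^sup>2"
      unfolding Sh_def using 2 \<open>0 < P\<close> f
      by (intro power_mono Lnorm_nonneg Lnorm_le_measure_powr) auto
    also have "\<dots> = measure lebesgue Sh powr (1/P - 2/q) * (Lnorm q Sh f)\<^sup>2"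
    proof -
      have "2 * (1/(2*P) - 1/q) = 1/P - 2/q" using \<open>0 < P\<close> by (simp add: field_simps)
      then show ?thesis by (simp add: power_mult_distrib power2_powr)
    qed
    also have "\<dots> \<le> (8 * K * R^3) powr (1/P - 2/q) * (Lnorm q (annulus R) f)\<^sup>2"
    proof (intro mult_mono powr_mono2 power_mono Lnorm_nonneg)
      show "measure lebesgue Sh \<le> 8 * K * R^3"
        unfolding Sh_def K_def using \<open>0 < R\<close> \<open>t \<le> 2*R\<close> by (rule measure_shell_le)
      show "Lnorm q Sh f \<le> Lnorm q (annulus R) f"
        using 2 \<open>0 < P\<close> by (intro shell_le_annulus) auto
      show "0 \<le> 1/P - 2/q"
        using 2 \<open>0 < P\<close> by (simp add: field_simps)
    qed auto
    also have "(8 * K * R^3) powr (1/P - 2/q) = (8 * K) powr (1/P - 2/q) * R powr (3/P - 6/q)"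
    proof -
      have "R^3 = R powr 3" using \<open>0 < R\<close> by (simp add: powr_numeral)
      moreover have "3 * (1/P - 2/q) = 3/P - 6/q" by (simp add: field_simps)
      ultimately have "(R^3) powr (1/P - 2/q) = R powr (3/P - 6/q)"
        by (simp add: powr_powr)
      then show ?thesis using \<open>0 < R\<close> \<open>K > 0\<close> by (simp add: powr_mult)
    qed
    finally show ?thesis unfolding Sh_def K_def .
  qed
qed

lemma J3_interpolation_bound:
  fixes P p q :: real
  assumes qP: "0 < q" "q < 2*P" "P < 3" and "s < t" and B: "continuous_on UNIV B"
  shows "1 / (t - s) * (Lnorm (2*P) (ball 0 t - ball 0 (3*R/2)) B)\<^sup>2 * Lnorm p (ball 0 t - ball 0 s) u
    \<le> 1 / (t - s) * Lnorm p (ball 0 t - ball 0 s) u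
      * Lnorm q (ball 0 t - ball 0 (3*R/2)) B powr (2*(3 - P)*q / ((6 - q)*P))
      * Lnorm 6 (ball 0 t - ball 0 (3*R/2)) B powr ((12*P - 6*q) / ((6 - q)*P))"
  using mult_left_mono[OF Lnorm_power2_interpolation_L6[OF qP B, of "ball 0 t - ball 0 (3*R/2)"],
      of "1 / (t - s) * Lnorm p (ball 0 t - ball 0 s) u"] \<open>s < t\<close>
  by (auto simp: Lnorm_nonneg mult_ac)

lemma J3_Young_bound:
  fixes P p q \<delta> :: real
  assumes qP: "0 < q" "q < 2*P" "P < 3" and "0 < p" "0 < \<delta>"
  shows "\<exists>C>0. \<forall>R s t u B. 3*R/2 \<le> s \<longrightarrow> s < t \<longrightarrow> t \<le> 2*R
      \<longrightarrow> continuous_on UNIV u \<longrightarrow> continuous_on UNIV B \<longrightarrow>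
      1 / (t - s) * (Lnorm (2*P) (ball 0 t - ball 0 (3*R/2)) B)\<^sup>2 * Lnorm p (ball 0 t - ball 0 s) u
      \<le> \<delta> * (Lnorm 6 (ball 0 t - ball 0 (3*R/2)) B)\<^sup>2
        + C / (t - s) powr ((6 - q) * P / ((3 - P) * q))
          * Lnorm p (annulus R) u powr ((6 - q) * P / ((3 - P) * q))
          * (Lnorm q (annulus R) B)\<^sup>2"
proof -
  define \<theta> where "\<theta> = (3 - P) * q / ((6 - q) * P)"
  have \<theta>: "0 < \<theta>" "\<theta> < 1" using qP by (auto simp: \<theta>_def field_simps)
  obtain C where "C > 0" and Young:
      "\<And>X Y. X \<ge> 0 \<Longrightarrow> Y \<ge> 0 \<Longrightarrow> Y * X powr (1 - \<theta>) \<le> \<delta> * X + C * Y powr (1/\<theta>)"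
    using Youngs_inequality_epsilon[OF \<theta> \<open>0 < \<delta>\<close>] by blast
  show ?thesis
  proof (intro exI[of _ C] conjI allI impI \<open>C > 0\<close>)
    fix R s t :: real and u B :: "real^3 \<Rightarrow> real^3"
    assume st: "3*R/2 \<le> s" "s < t" "t \<le> 2*R" and u: "continuous_on UNIV u" and B: "continuous_on UNIV B"
    define U where "U = Lnorm p (ball 0 t - ball 0 s) u"
    define Q where "Q = Lnorm q (ball 0 t - ball 0 (3*R/2)) B"
    define S where "S = Lnorm 6 (ball 0 t - ball 0 (3*R/2)) B"
    define Y where "Y = 1 / (t - s) * U * Q powr (2*\<theta>)"
    have "U \<ge> 0" "Q \<ge> 0" "S \<ge> 0" "Y \<ge> 0"
      using st by (simp_all add: U_def Q_def S_def Y_def Lnorm_nonneg)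
    have "2*(3 - P)*q / ((6 - q)*P) = 2*\<theta>" "(12*P - 6*q) / ((6 - q)*P) = 2*(1 - \<theta>)"
      using qP by (simp_all add: \<theta>_def field_simps)
    then have "1 / (t - s) * (Lnorm (2*P) (ball 0 t - ball 0 (3*R/2)) B)\<^sup>2 * U
        \<le> 1 / (t - s) * U * Q powr (2*\<theta>) * S powr (2*(1 - \<theta>))"
      using J3_interpolation_bound[OF qP \<open>s < t\<close> B] by (simp add: U_def Q_def S_def)
    also have "\<dots> = Y * (S\<^sup>2) powr (1 - \<theta>)"
      using \<open>S \<ge> 0\<close> by (simp add: Y_def powr_power2)
    also have "\<dots> \<le> \<delta> * S\<^sup>2 + C * Y powr (1/\<theta>)"
      using \<open>Y \<ge> 0\<close> by (intro Young) auto
    also have "Y powr (1/\<theta>) = 1 / (t - s) powr (1/\<theta>) * U powr (1/\<theta>) * Q\<^sup>2"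
    proof -
      have "(Q powr (2*\<theta>)) powr (1/\<theta>) = Q\<^sup>2"
        using \<theta> \<open>Q \<ge> 0\<close> powr_power2[of Q 1] by (simp add: powr_powr)
      then show ?thesis
        using \<open>Q \<ge> 0\<close> \<open>U \<ge> 0\<close> st by (simp add: Y_def powr_mult powr_divide)
    qed
    also have "\<dots> \<le> 1 / (t - s) powr (1/\<theta>) * Lnorm p (annulus R) u powr (1/\<theta>) * (Lnorm q (annulus R) B)\<^sup>2"
      using \<theta> st \<open>0 < p\<close> \<open>0 < q\<close> u B \<open>Q \<ge> 0\<close> \<open>U \<ge> 0\<close>
      unfolding U_def Q_def
      by (intro mult_mono powr_mono2 power_mono Lnorm_shell_le_annulus) auto
    finally show "1 / (t - s) * (Lnorm (2*P) (ball 0 t - ball 0 (3*R/2)) B)\<^sup>2 * Lnorm p (ball 0 t - ball 0 s) u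
      \<le> \<delta> * (Lnorm 6 (ball 0 t - ball 0 (3*R/2)) B)\<^sup>2
        + C / (t - s) powr ((6 - q) * P / ((3 - P) * q))
          * Lnorm p (annulus R) u powr ((6 - q) * P / ((3 - P) * q))
          * (Lnorm q (annulus R) B)\<^sup>2"
      using \<open>C > 0\<close> by (simp add: U_def S_def \<theta>_def)
  qed
qed

lemma J3_large_q_bound:
  fixes P p q :: real
  assumes "0 < P" "2*P \<le> q" "0 < p"
  shows "\<exists>C>0. \<forall>R s t u B. 0 < R \<longrightarrow> 3*R/2 \<le> s \<longrightarrow> s < t \<longrightarrow> t \<le> 2*R
      \<longrightarrow> continuous_on UNIV u \<longrightarrow> continuous_on UNIV B \<longrightarrow>
      1 / (t - s) * (Lnorm (2*P) (ball 0 t - ball 0 (3*R/2)) B)\<^sup>2 * Lnorm p (ball 0 t - ball 0 s) u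
      \<le> C / (t - s) * R powr (3/P - 6/q) * (Lnorm q (annulus R) B)\<^sup>2 * Lnorm p (annulus R) u"
proof -
  define C where "C = (8 * measure lborel (ball (0::real^3) 1)) powr (1/P - 2/q)"
  have "C > 0" unfolding C_def by (simp add: content_ball_pos)
  show ?thesis
  proof (intro exI[of _ C] conjI allI impI \<open>C > 0\<close>)
    fix R s t :: real and u B :: "real^3 \<Rightarrow> real^3"
    assume "0 < R" "3*R/2 \<le> s" "s < t" "t \<le> 2*R" and u: "continuous_on UNIV u" and B: "continuous_on UNIV B"
    have "(Lnorm (2*P) (ball 0 t - ball 0 (3*R/2)) B)\<^sup>2 \<le> C * R powr (3/P - 6/q) * (Lnorm q (annulus R) B)\<^sup>2"
      unfolding C_def using assms(1,2) \<open>0 < R\<close> \<open>t \<le> 2*R\<close> B by (rule Lnorm_shell_power2_le_annulus)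
    moreover have "Lnorm p (ball 0 t - ball 0 s) u \<le> Lnorm p (annulus R) u"
      using assms \<open>3*R/2 \<le> s\<close> \<open>t \<le> 2*R\<close> u by (intro Lnorm_shell_le_annulus) auto
    ultimately have "(Lnorm (2*P) (ball 0 t - ball 0 (3*R/2)) B)\<^sup>2 * Lnorm p (ball 0 t - ball 0 s) u
        \<le> C * R powr (3/P - 6/q) * (Lnorm q (annulus R) B)\<^sup>2 * Lnorm p (annulus R) u"
      by (intro mult_mono) (auto simp: Lnorm_nonneg intro: order_trans[OF zero_le_power2])
    then show "1 / (t - s) * (Lnorm (2*P) (ball 0 t - ball 0 (3*R/2)) B)\<^sup>2 * Lnorm p (ball 0 t - ball 0 s) u
        \<le> C / (t - s) * R powr (3/P - 6/q) * (Lnorm q (annulus R) B)\<^sup>2 * Lnorm p (annulus R) u"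
      using \<open>s < t\<close> by (simp add: divide_right_mono)
  qed
qed

lemma three_halves_le_of_sqrt3_le:
  fixes R s :: real
  assumes "0 < R" "sqrt 3 * R \<le> s"
  shows "3*R/2 \<le> s"
proof -
  have "3/2 \<le> sqrt (3::real)" by (rule real_le_rsqrt) (simp add: power2_eq_square)
  then have "3/2 * R \<le> sqrt 3 * R" using assms(1) by (intro mult_right_mono) auto
  then show ?thesis using assms(2) by simp
qed

theorem lemma2p6:
  fixes p q :: real
  assumes hp: "3/2 < p" "p \<le> 9/2"
    and hq: "q \<ge> 1"
  defines "p' \<equiv> p / (p - 1)"
  defines "J3 \<equiv> (\<lambda>(R::real) (s::real) (t::real) (u::real^3 \<Rightarrow> real^3) (B::real^3 \<Rightarrow> real^3).
      1 / (t - s) * (Lnorm (2*p') (ball 0 t - ball 0 (3*R/2)) B)^2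
        * Lnorm p (ball 0 t - ball 0 s) u)"
  shows
    "(q < 2*p' \<longrightarrow>
       (\<forall>\<delta>>0. \<exists>C>0. \<forall>R s t u B. R > 0 \<longrightarrow> sqrt 3 * R \<le> s \<longrightarrow> s < t \<longrightarrow> t \<le> 2*R
          \<longrightarrow> smooth3 u \<longrightarrow> smooth3 B \<longrightarrow>
          J3 R s t u B \<le> \<delta> * (Lnorm 6 (ball 0 t - ball 0 (3*R/2)) B)^2
            + C / (t - s) powr ((6 - q) * p' / ((3 - p') * q))
              * Lnorm p (annulus R) u powr ((6 - q) * p' / ((3 - p') * q))
              * (Lnorm q (annulus R) B)^2))
     \<and> (q < 2*p' \<longrightarrow>
       (\<forall>R s t u B. R > 0 \<longrightarrow> sqrt 3 * R \<le> s \<longrightarrow> s < t \<longrightarrow> t \<le> 2*R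
          \<longrightarrow> smooth3 u \<longrightarrow> smooth3 B \<longrightarrow>
          J3 R s t u B \<le> 1 / (t - s) * Lnorm p (ball 0 t - ball 0 s) u
            * Lnorm q (ball 0 t - ball 0 (3*R/2)) B powr (2 * (3 - p') * q / ((6 - q) * p'))
            * Lnorm 6 (ball 0 t - ball 0 (3*R/2)) B powr ((12 * p' - 6 * q) / ((6 - q) * p'))))
     \<and> (q \<ge> 2*p' \<longrightarrow>
       (\<exists>C>0. \<forall>R s t u B. R > 0 \<longrightarrow> sqrt 3 * R \<le> s \<longrightarrow> s < t \<longrightarrow> t \<le> 2*R
          \<longrightarrow> smooth3 u \<longrightarrow> smooth3 B \<longrightarrow>
          J3 R s t u B \<le> C / (t - s) * R powr (3 - 3/p - 6/q)
            * (Lnorm q (annulus R) B)^2 * Lnorm p (annulus R) u))"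
proof -
  have "0 < p" "0 < q" using hp hq by auto
  have p': "0 < p'" "p' < 3" "3/p' = 3 - 3/p"
    unfolding p'_def using hp by (simp_all add: field_simps)
  show ?thesis (is "?i \<and> ?ii \<and> ?iii")
  proof (intro conjI)
    show ?i
      using J3_Young_bound[OF \<open>0 < q\<close> _ \<open>p' < 3\<close> \<open>0 < p\<close>]
      unfolding J3_def by (meson smooth3_imp_continuous three_halves_le_of_sqrt3_le)
    show ?ii
      using J3_interpolation_bound[OF \<open>0 < q\<close> _ \<open>p' < 3\<close>]
      unfolding J3_def by (simp add: smooth3_imp_continuous)
    show ?iii
      using J3_large_q_bound[OF \<open>0 < p'\<close> _ \<open>0 < p\<close>, of q, unfolded p'(3)]
      unfolding J3_def by (meson smooth3_imp_continuous three_halves_le_of_sqrt3_le)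
  qed
qed

end
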